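(* Let $\nu\ge1$, $\rho>0$, fix $1\le n\le \nu$ and fix $\lambda_m>0$ for all $m\ne n$. For $\lambda_n>0$, let $X=(X_1,\dots,X_\nu)^T$ have the truncated normal density $$f(x)=k\prod_{m=1}^{\nu}\lambda_m^{-1/2}\phi(\lambda_m^{-1/2}x_m)\ \text{ if } x^Tx<\rho,\qquad f(x)=0 \text{ otherwise},$$ with $\phi$ the standard normal density and $k>0$ the normalizing constant. Then $E(\lambda_n^{-1}X_n^2)$, viewed as a function of $\lambda_n\in(0,\infty)$, is nonincreasing. *)

theory Defs
  imports "HOL-Probability.Probability"
begin

definition tn_dens :: "real \<Rightarrow> ('n::finite \<Rightarrow> real) \<Rightarrow> real^'n \<Rightarrow> real" where
  "tn_dens \<rho> lam x =
     (if x \<bullet> x < \<rho>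
      then (\<Prod>m\<in>UNIV. lam m powr (-1/2) * std_normal_density (lam m powr (-1/2) * x $ m))
      else 0)"

definition tn_const :: "real \<Rightarrow> ('n::finite \<Rightarrow> real) \<Rightarrow> real" where
  "tn_const \<rho> lam = 1 / (\<integral>x. tn_dens \<rho> lam x \<partial>lborel)"

definition tn_pdf :: "real \<Rightarrow> ('n::finite \<Rightarrow> real) \<Rightarrow> real^'n \<Rightarrow> real" where
  "tn_pdf \<rho> lam x = tn_const \<rho> lam * tn_dens \<rho> lam x"

definition tn_expect :: "real \<Rightarrow> ('n::finite \<Rightarrow> real) \<Rightarrow> 'n \<Rightarrow> real" where
  "tn_expect \<rho> lam n = (\<integral>x. (x $ n)\<^sup>2 / lam n * tn_pdf \<rho> lam x \<partial>lborel)"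

end

theory Submission
  imports Defs
begin

(* Let Y be the vector of the coordinates m \<noteq> n: independent centred Gaussians with
   variances lam m, and let G(t) = P(sum of the Y_m^2 < t).  Fubini in the n-th coordinate and
   the substitution x_n = sqrt(lam_n) s give
     E(X_n^2 / lam_n) = (\<integral> s^2 phi(s) G(rho - lam_n s^2) ds) / (\<integral> phi(s) G(rho - lam_n s^2) ds),
   where phi is the standard normal density and G does not depend on lam_n.  G is nondecreasing
   and log-concave; log-concavity is proved by induction on the number of coordinates, each step
   being an instance of the one-dimensional Prekopa-Leindler inequality, which is derived from
   the one-dimensional Brunn-Minkowski inequality via the layer-cake formula.  For a monotone
   log-concave G and a \<le> b, r^2 \<le> s^2 one has the total-positivity inequality
   G(rho - b s^2) G(rho - a r^2) \<le> G(rho - b r^2) G(rho - a s^2); symmetrising the product of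
   the two integrals turns it into the cross-multiplied form of the claimed monotonicity. *)

section \<open>Brunn-Minkowski and Prekopa-Leindler on the real line\<close>

lemma emeasure_lborel_scaled_copy:
  fixes c t :: real and A :: "real set"
  assumes c: "0 < c" and A[measurable]: "A \<in> sets borel"
  shows "emeasure lborel ((\<lambda>x. (x - t) / c) -` A) = ennreal c * emeasure lborel A"
proof -
  have aff: "(\<lambda>x. (x - t) / c) = (\<lambda>x. - t / c + (1 / c) * x)"
    by (auto simp: fun_eq_iff diff_divide_distrib)
  have "emeasure lborel A
      = emeasure (density (distr lborel borel (\<lambda>x. - t / c + (1 / c) * x)) (\<lambda>_. ennreal (1 / c))) A"
    using lborel_real_affine[of "1 / c" "- t / c"] c by simp
  also have "\<dots> = ennreal (1 / c) * emeasure lborel ((\<lambda>x. (x - t) / c) -` A)"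
    unfolding aff by (simp add: emeasure_density nn_integral_cmult_indicator emeasure_distr)
  finally have "ennreal c * emeasure lborel A
      = (ennreal c * ennreal (1 / c)) * emeasure lborel ((\<lambda>x. (x - t) / c) -` A)"
    by (simp add: mult.assoc)
  also have "ennreal c * ennreal (1 / c) = 1"
    using c by (simp flip: ennreal_mult)
  finally show ?thesis by simp
qed

lemma scaled_copy_le_Sup:
  fixes c t x :: real
  assumes "0 < c" "bdd_above A" "(x - t) / c \<in> A"
  shows "x \<le> t + c * Sup A"
proof -
  have "(x - t) / c \<le> Sup A" using cSup_upper assms(2,3) by blast
  then show ?thesis using assms(1) by (simp add: pos_divide_le_eq algebra_simps)
qed

lemma scaled_copy_ge_Inf:
  fixes c t x :: real
  assumes "0 < c" "bdd_below A" "(x - t) / c \<in> A"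
  shows "t + c * Inf A \<le> x"
proof -
  have "Inf A \<le> (x - t) / c" using cInf_lower assms(2,3) by blast
  then show ?thesis using assms(1) by (simp add: pos_le_divide_eq algebra_simps)
qed

text \<open>Approximate Brunn-Minkowski: with a0 in A and b0 in B, the copies (1 - t) A + t b0 and
  (1 - t) a0 + t B lie in C, have the right measures, and overlap only in an interval whose
  length measures how far a0 is from Sup A and b0 from Inf B.\<close>

lemma brunn_minkowski_1d_approx:
  fixes A B C :: "real set" and \<theta> a0 b0 :: real
  assumes \<theta>: "0 < \<theta>" "\<theta> < 1"
    and [measurable]: "A \<in> sets borel" "B \<in> sets borel" "C \<in> sets borel"
    and a0: "a0 \<in> A" and b0: "b0 \<in> B" and bdd: "bdd_above A" "bdd_below B"
    and sub: "\<And>a b. a \<in> A \<Longrightarrow> b \<in> B \<Longrightarrow> (1 - \<theta>) * a + \<theta> * b \<in> C"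
  shows "ennreal (1 - \<theta>) * emeasure lborel A + ennreal \<theta> * emeasure lborel B
         \<le> emeasure lborel C + ennreal ((1 - \<theta>) * (Sup A - a0) + \<theta> * (b0 - Inf B))"
proof -
  define E1 where "E1 = (\<lambda>x. (x - \<theta> * b0) / (1 - \<theta>)) -` A"
  define E2 where "E2 = (\<lambda>x. (x - (1 - \<theta>) * a0) / \<theta>) -` B"
  have [measurable]: "E1 \<in> sets borel" "E2 \<in> sets borel"
    unfolding E1_def E2_def by (intro measurable_sets_borel[of _ borel]; measurable)+
  have E1C: "E1 \<subseteq> C"
  proof
    fix x assume "x \<in> E1"
    then have "(x - \<theta> * b0) / (1 - \<theta>) \<in> A" by (simp add: E1_def)
    from sub[OF this b0] show "x \<in> C" using \<theta> by simp
  qed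
  have E2C: "E2 \<subseteq> C"
  proof
    fix x assume "x \<in> E2"
    then have "(x - (1 - \<theta>) * a0) / \<theta> \<in> B" by (simp add: E2_def)
    from sub[OF a0 this] show "x \<in> C" using \<theta> by simp
  qed
  have "E1 \<inter> E2 \<subseteq> {(1 - \<theta>) * a0 + \<theta> * Inf B .. \<theta> * b0 + (1 - \<theta>) * Sup A}"
    using \<theta> scaled_copy_le_Sup[OF _ bdd(1)] scaled_copy_ge_Inf[OF _ bdd(2)]
    by (auto simp: E1_def E2_def)
  then have "emeasure lborel (E1 \<inter> E2)
      \<le> emeasure lborel {(1 - \<theta>) * a0 + \<theta> * Inf B .. \<theta> * b0 + (1 - \<theta>) * Sup A}"
    by (rule emeasure_mono) simp
  also have "\<dots> \<le> ennreal ((1 - \<theta>) * (Sup A - a0) + \<theta> * (b0 - Inf B))"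
    by (auto simp: emeasure_lborel_Icc_eq algebra_simps intro: ennreal_leI)
  finally have overlap: "emeasure lborel (E1 \<inter> E2) \<le> ennreal ((1 - \<theta>) * (Sup A - a0) + \<theta> * (b0 - Inf B))" .
  have "ennreal (1 - \<theta>) * emeasure lborel A + ennreal \<theta> * emeasure lborel B
        = emeasure lborel E1 + emeasure lborel E2"
    using \<theta> by (simp add: E1_def E2_def emeasure_lborel_scaled_copy)
  also have "\<dots> = emeasure lborel (E1 \<union> E2) + emeasure lborel (E1 \<inter> E2)"
    by (rule emeasure_Un_Int) auto
  also have "\<dots> \<le> emeasure lborel C + ennreal ((1 - \<theta>) * (Sup A - a0) + \<theta> * (b0 - Inf B))"
    using E1C E2C by (intro add_mono overlap emeasure_mono) auto
  finally show ?thesis .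
qed

text \<open>The one-dimensional Brunn-Minkowski inequality, in the additive form needed below;
  a0 and b0 are chosen arbitrarily close to Sup A and Inf B.\<close>

lemma brunn_minkowski_1d:
  fixes A B C :: "real set" and \<theta> :: real
  assumes \<theta>: "0 < \<theta>" "\<theta> < 1"
    and [measurable]: "A \<in> sets borel" "B \<in> sets borel" "C \<in> sets borel"
    and ne: "A \<noteq> {}" "B \<noteq> {}" and bdd: "bdd_above A" "bdd_below B"
    and sub: "\<And>a b. a \<in> A \<Longrightarrow> b \<in> B \<Longrightarrow> (1 - \<theta>) * a + \<theta> * b \<in> C"
  shows "ennreal (1 - \<theta>) * emeasure lborel A + ennreal \<theta> * emeasure lborel B \<le> emeasure lborel C"
proof (rule ennreal_le_epsilon)
  fix e :: real assume e: "0 < e"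
  obtain a0 where a0: "a0 \<in> A" "Sup A - e < a0"
    using less_cSupD[OF ne(1), of "Sup A - e"] e by auto
  obtain b0 where b0: "b0 \<in> B" "b0 < Inf B + e"
    using cInf_lessD[OF ne(2), of "Inf B + e"] e by auto
  have "(1 - \<theta>) * (Sup A - a0) + \<theta> * (b0 - Inf B) \<le> (1 - \<theta>) * e + \<theta> * e"
    using a0 b0 \<theta> by (intro add_mono mult_left_mono) auto
  then have "ennreal ((1 - \<theta>) * (Sup A - a0) + \<theta> * (b0 - Inf B)) \<le> ennreal e"
    by (intro ennreal_leI) (simp add: algebra_simps)
  with brunn_minkowski_1d_approx[OF \<theta> _ _ _ a0(1) b0(1) bdd sub]
  show "ennreal (1 - \<theta>) * emeasure lborel A + ennreal \<theta> * emeasure lborel B \<le> emeasure lborel C + ennreal e"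
    by (meson add_left_mono order_trans sets_lborel \<open>A \<in> sets borel\<close> \<open>B \<in> sets borel\<close> \<open>C \<in> sets borel\<close>)
qed

lemma nn_integral_layer_cake:
  fixes u :: "real \<Rightarrow> real"
  assumes [measurable]: "u \<in> borel_measurable borel" and nn: "\<And>x. 0 \<le> u x"
  shows "(\<integral>\<^sup>+x. ennreal (u x) \<partial>lborel) =
         (\<integral>\<^sup>+s. indicator {0<..} s * emeasure lborel {x. s < u x} \<partial>lborel)"
proof -
  have "(\<integral>\<^sup>+x. ennreal (u x) \<partial>lborel) = (\<integral>\<^sup>+x. (\<integral>\<^sup>+s. indicator {0<..<u x} s \<partial>lborel) \<partial>lborel)"
    using nn by (intro nn_integral_cong) simp
  also have "\<dots> = (\<integral>\<^sup>+x. (\<integral>\<^sup>+s. indicator {p. 0 < snd p \<and> snd p < u (fst p)} (x, s) \<partial>lborel) \<partial>lborel)"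
    by (intro nn_integral_cong) (auto simp: indicator_def)
  also have "\<dots> = (\<integral>\<^sup>+s. (\<integral>\<^sup>+x. indicator {p. 0 < snd p \<and> snd p < u (fst p)} (x, s) \<partial>lborel) \<partial>lborel)"
    by (rule lborel_pair.Fubini'[symmetric]) measurable
  also have "\<dots> = (\<integral>\<^sup>+s. indicator {0<..} s * emeasure lborel {x. s < u x} \<partial>lborel)"
  proof (intro nn_integral_cong)
    fix s :: real
    have "(\<lambda>x. indicator {p. 0 < snd p \<and> snd p < u (fst p)} (x, s) :: ennreal)
          = (\<lambda>x. indicator {0<..} s * indicator {x. s < u x} x)"
      by (auto simp: indicator_def fun_eq_iff)
    then show "(\<integral>\<^sup>+x. indicator {p. 0 < snd p \<and> snd p < u (fst p)} (x, s) \<partial>lborel)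
        = indicator {0<..} s * emeasure lborel {x. s < u x}"
      by (simp add: nn_integral_cmult)
  qed
  finally show ?thesis .
qed

lemma measurable_superlevel_measure [measurable]:
  fixes u :: "real \<Rightarrow> real"
  assumes [measurable]: "u \<in> borel_measurable borel"
  shows "(\<lambda>s. emeasure lborel {x. s < u x}) \<in> borel_measurable lborel"
proof -
  have "{p \<in> space (lborel \<Otimes>\<^sub>M lborel). fst p < u (snd p)} \<in> sets (lborel \<Otimes>\<^sub>M lborel)"
    by measurable
  then have "{p :: real \<times> real. fst p < u (snd p)} \<in> sets (lborel \<Otimes>\<^sub>M lborel)"
    by (simp add: space_pair_measure)
  from lborel.measurable_emeasure_Pair[OF this] show ?thesis
    by (simp add: vimage_def)
qed

lemma superlevel_brunn_minkowski:
  fixes f g h :: "real \<Rightarrow> real" and \<theta> s :: real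
  assumes \<theta>: "0 < \<theta>" "\<theta> < 1" and s: "0 < s"
    and [measurable]: "f \<in> borel_measurable borel" "g \<in> borel_measurable borel" "h \<in> borel_measurable borel"
    and ne: "{x. s < f x} \<noteq> {}" "{x. s < g x} \<noteq> {}"
    and bdd: "bounded {x. s < f x}" "bounded {x. s < g x}"
    and hyp: "\<And>x y. f x powr (1 - \<theta>) * g y powr \<theta> \<le> h ((1 - \<theta>) * x + \<theta> * y)"
  shows "ennreal (1 - \<theta>) * emeasure lborel {x. s < f x} + ennreal \<theta> * emeasure lborel {x. s < g x}
         \<le> emeasure lborel {x. s < h x}"
proof (rule brunn_minkowski_1d[OF \<theta> _ _ _ ne])
  show "bdd_above {x. s < f x}" "bdd_below {x. s < g x}"
    using bdd by (auto intro: bounded_imp_bdd_above bounded_imp_bdd_below)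
  fix a b assume a: "a \<in> {x. s < f x}" and b: "b \<in> {x. s < g x}"
  have "s = s powr (1 - \<theta>) * s powr \<theta>" using s by (simp flip: powr_add)
  also have "\<dots> < f a powr (1 - \<theta>) * g b powr \<theta>"
    using a b s \<theta> by (intro mult_strict_mono powr_less_mono2) auto
  also have "\<dots> \<le> h ((1 - \<theta>) * a + \<theta> * b)" by (rule hyp)
  finally show "(1 - \<theta>) * a + \<theta> * b \<in> {x. s < h x}" by simp
qed measurable

text \<open>The additive form of the Prekopa-Leindler inequality for functions normalised to have
  supremum one; it follows by integrating the previous lemma over all levels.\<close>

lemma prekopa_leindler_normalized:
  fixes f g h :: "real \<Rightarrow> real" and \<theta> :: real
  assumes \<theta>: "0 < \<theta>" "\<theta> < 1"
    and [measurable]: "f \<in> borel_measurable borel" "g \<in> borel_measurable borel" "h \<in> borel_measurable borel"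
    and nn: "\<And>x. 0 \<le> f x" "\<And>x. 0 \<le> g x" "\<And>x. 0 \<le> h x"
    and le1: "\<And>x. f x \<le> 1" "\<And>x. g x \<le> 1"
    and sup1: "\<And>s. s < 1 \<Longrightarrow> \<exists>x. s < f x" "\<And>s. s < 1 \<Longrightarrow> \<exists>x. s < g x"
    and bdd: "\<And>s. 0 < s \<Longrightarrow> bounded {x. s < f x}" "\<And>s. 0 < s \<Longrightarrow> bounded {x. s < g x}"
    and hyp: "\<And>x y. f x powr (1 - \<theta>) * g y powr \<theta> \<le> h ((1 - \<theta>) * x + \<theta> * y)"
  shows "ennreal (1 - \<theta>) * (\<integral>\<^sup>+x. f x \<partial>lborel) + ennreal \<theta> * (\<integral>\<^sup>+x. g x \<partial>lborel)
         \<le> (\<integral>\<^sup>+x. h x \<partial>lborel)"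
proof -
  have level: "indicator {0<..} s * (ennreal (1 - \<theta>) * emeasure lborel {x. s < f x}
                 + ennreal \<theta> * emeasure lborel {x. s < g x})
       \<le> indicator {0<..} s * emeasure lborel {x. s < h x}" for s :: real
  proof (cases "0 < s \<and> s < 1")
    case True
    then show ?thesis
      using superlevel_brunn_minkowski[OF \<theta>, of s f g h] sup1 bdd hyp
      by (intro mult_left_mono) auto
  next
    case False
    have "\<not> s < f x" "\<not> s < g x" if "0 < s" for x
      using le1[of x] False that by linarith+
    then show ?thesis by (cases "0 < s") auto
  qed
  have "ennreal (1 - \<theta>) * (\<integral>\<^sup>+x. f x \<partial>lborel) + ennreal \<theta> * (\<integral>\<^sup>+x. g x \<partial>lborel)
      = (\<integral>\<^sup>+s. indicator {0<..} s * (ennreal (1 - \<theta>) * emeasure lborel {x. s < f x}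
           + ennreal \<theta> * emeasure lborel {x. s < g x}) \<partial>lborel)"
    using nn by (simp add: nn_integral_layer_cake nn_integral_add nn_integral_cmult distrib_left mult_ac)
  also have "\<dots> \<le> (\<integral>\<^sup>+s. indicator {0<..} s * emeasure lborel {x. s < h x} \<partial>lborel)"
    by (rule nn_integral_mono) (rule level)
  also have "\<dots> = (\<integral>\<^sup>+x. h x \<partial>lborel)"
    using nn by (simp add: nn_integral_layer_cake)
  finally show ?thesis .
qed

lemma sup_normalized:
  fixes f :: "real \<Rightarrow> real"
  assumes bdd: "bdd_above (range f)" and M: "0 < (SUP x. f x)"
  shows "f x / (SUP x. f x) \<le> 1" and "s < 1 \<Longrightarrow> \<exists>x. s < f x / (SUP x. f x)"
proof -
  show "f x / (SUP x. f x) \<le> 1"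
    using cSUP_upper[OF UNIV_I bdd] M by simp
  assume "s < 1"
  then have "s * (SUP x. f x) < (SUP x. f x)" using M by simp
  then obtain x where "s * (SUP x. f x) < f x" using bdd by (auto simp: less_cSUP_iff)
  then show "\<exists>x. s < f x / (SUP x. f x)" using M by (auto simp: pos_less_divide_eq)
qed

text \<open>Passage from the normalised additive inequality to the multiplicative one: rescaling by
  c = M^(1-t) N^t and the weighted AM-GM inequality.\<close>

lemma geometric_mean_from_normalized:
  fixes F G H M N \<theta> :: real
  assumes "0 \<le> F" "0 \<le> G" "0 \<le> H" "0 < M" "0 < N" "0 < \<theta>" "\<theta> < 1"
    and add: "(1 - \<theta>) * (F / M) + \<theta> * (G / N) \<le> H / (M powr (1 - \<theta>) * N powr \<theta>)"
  shows "F powr (1 - \<theta>) * G powr \<theta> \<le> H"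
proof -
  define c where "c = M powr (1 - \<theta>) * N powr \<theta>"
  have c: "0 < c" unfolding c_def using assms by simp
  have add_c: "(1 - \<theta>) * (F / M) + \<theta> * (G / N) \<le> H / c" using add unfolding c_def .
  have "F powr (1 - \<theta>) * G powr \<theta> = c * ((F / M) powr (1 - \<theta>) * (G / N) powr \<theta>)"
    unfolding c_def using assms by (simp add: powr_divide field_simps)
  also have "\<dots> \<le> c * ((1 - \<theta>) * (F / M) + \<theta> * (G / N))"
  proof -
    have "(F / M) powr (1 - \<theta>) * (G / N) powr \<theta> \<le> (1 - \<theta>) * (F / M) + \<theta> * (G / N)"
      using assms Youngs_inequality_0[of "1 - \<theta>" \<theta> "F / M" "G / N"]
      by (cases "F = 0 \<or> G = 0") auto
    then show ?thesis using c by (intro mult_left_mono) auto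
  qed
  also have "\<dots> \<le> H" using add_c c by (simp add: pos_le_divide_eq mult.commute)
  finally show ?thesis .
qed

text \<open>It follows from the normalised additive
  form applied to f / sup f and g / sup g, together with the weighted AM-GM inequality.\<close>

lemma prekopa_leindler_1d:
  fixes f g h :: "real \<Rightarrow> real" and \<theta> :: real
  assumes \<theta>: "0 < \<theta>" "\<theta> < 1"
    and [measurable]: "f \<in> borel_measurable borel" "g \<in> borel_measurable borel" "h \<in> borel_measurable borel"
    and nn: "\<And>x. 0 \<le> f x" "\<And>x. 0 \<le> g x" "\<And>x. 0 \<le> h x"
    and bdd: "bdd_above (range f)" "bdd_above (range g)"
    and lvl: "\<And>s. 0 < s \<Longrightarrow> bounded {x. s < f x}" "\<And>s. 0 < s \<Longrightarrow> bounded {x. s < g x}"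
    and hyp: "\<And>x y. f x powr (1 - \<theta>) * g y powr \<theta> \<le> h ((1 - \<theta>) * x + \<theta> * y)"
    and int: "integrable lborel f" "integrable lborel g" "integrable lborel h"
  shows "(\<integral>x. f x \<partial>lborel) powr (1 - \<theta>) * (\<integral>x. g x \<partial>lborel) powr \<theta> \<le> (\<integral>x. h x \<partial>lborel)"
proof -
  define If Ig Ih where "If = (\<integral>x. f x \<partial>lborel)" "Ig = (\<integral>x. g x \<partial>lborel)" "Ih = (\<integral>x. h x \<partial>lborel)"
  define Mf Mg where "Mf = (SUP x. f x)" "Mg = (SUP x. g x)"
  have I0: "0 \<le> If" "0 \<le> Ig" "0 \<le> Ih" unfolding If_Ig_Ih_def using nn by (simp_all add: integral_nonneg)
  have fM: "f x \<le> Mf" and gM: "g x \<le> Mg" for x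
    unfolding Mf_Mg_def using bdd by (auto intro: cSUP_upper)
  show ?thesis
  proof (cases "Mf = 0 \<or> Mg = 0")
    case True
    then have "(\<forall>x. f x = 0) \<or> (\<forall>x. g x = 0)" using fM gM nn by (meson antisym)
    then have "f = (\<lambda>_. 0) \<or> g = (\<lambda>_. 0)" by auto
    then show ?thesis using I0 by (auto simp: If_Ig_Ih_def)
  next
    case False
    then have Mf: "0 < Mf" and Mg: "0 < Mg" using fM[of 0] gM[of 0] nn(1,2)[of 0] by linarith+
    define c where "c = Mf powr (1 - \<theta>) * Mg powr \<theta>"
    have c: "0 < c" unfolding c_def using Mf Mg by simp
    have "ennreal (1 - \<theta>) * (\<integral>\<^sup>+x. f x / Mf \<partial>lborel) + ennreal \<theta> * (\<integral>\<^sup>+x. g x / Mg \<partial>lborel)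
         \<le> (\<integral>\<^sup>+x. h x / c \<partial>lborel)"
    proof (rule prekopa_leindler_normalized[OF \<theta>])
      show "(\<lambda>x. f x / Mf) x \<le> 1" "(\<lambda>x. g x / Mg) x \<le> 1" for x
        using sup_normalized(1) bdd Mf Mg unfolding Mf_Mg_def by auto
      show "\<exists>x. s < f x / Mf" "\<exists>x. s < g x / Mg" if "s < 1" for s
        using sup_normalized(2) bdd Mf Mg that unfolding Mf_Mg_def by auto
      show "bounded {x. s < f x / Mf}" "bounded {x. s < g x / Mg}" if "0 < s" for s
        using lvl[of "s * Mf"] lvl[of "s * Mg"] that Mf Mg by (simp_all add: pos_less_divide_eq)
      show "(f x / Mf) powr (1 - \<theta>) * (g y / Mg) powr \<theta> \<le> h ((1 - \<theta>) * x + \<theta> * y) / c" for x y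
        using hyp[of x y] nn c Mf Mg
        by (simp add: c_def powr_divide divide_right_mono)
    qed (use nn Mf Mg c in auto)
    moreover have "(\<integral>\<^sup>+x. f x / Mf \<partial>lborel) = ennreal (If / Mf)"
      "(\<integral>\<^sup>+x. g x / Mg \<partial>lborel) = ennreal (Ig / Mg)" "(\<integral>\<^sup>+x. h x / c \<partial>lborel) = ennreal (Ih / c)"
      unfolding If_Ig_Ih_def using int nn Mf Mg c by (subst nn_integral_eq_integral; simp)+
    ultimately have "ennreal ((1 - \<theta>) * (If / Mf) + \<theta> * (Ig / Mg)) \<le> ennreal (Ih / c)"
      using \<theta> I0 Mf Mg by (simp add: ennreal_mult' del: times_divide_eq_right)
    then have "(1 - \<theta>) * (If / Mf) + \<theta> * (Ig / Mg) \<le> Ih / c"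
      using I0 c by (subst (asm) ennreal_le_iff) auto
    with I0 Mf Mg \<theta> show ?thesis unfolding If_Ig_Ih_def c_def by (rule geometric_mean_from_normalized)
  qed
qed

section \<open>Centred Gaussian densities\<close>

definition gauss :: "real \<Rightarrow> real \<Rightarrow> real" where
  "gauss c z = normal_density 0 (sqrt c) z"

lemma gauss_nonneg [simp]: "0 \<le> gauss c z"
  by (simp add: gauss_def)

lemma gauss_measurable [measurable]: "gauss c \<in> borel_measurable borel"
  unfolding gauss_def by measurable

lemma integrable_gauss [simp]: "0 < c \<Longrightarrow> integrable lborel (gauss c)"
  unfolding gauss_def by (rule integrable_normal_density) simp

lemma nn_integral_gauss: "0 < c \<Longrightarrow> (\<integral>\<^sup>+x. ennreal (gauss c x) \<partial>lborel) = 1"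
  unfolding gauss_def by (subst nn_integral_eq_integral) (auto intro: integrable_normal_density)

lemma gauss_formula: "0 < c \<Longrightarrow> gauss c z = (1 / sqrt (2 * pi * c)) * exp (- z\<^sup>2 / (2 * c))"
  unfolding gauss_def normal_density_def by simp

lemma gauss_le:
  assumes "0 < c" shows "gauss c z \<le> 1 / sqrt (2 * pi * c)"
proof -
  have "exp (- z\<^sup>2 / (2 * c)) \<le> 1" using assms by simp
  then show ?thesis using assms by (simp add: gauss_formula divide_right_mono)
qed

lemma bounded_superlevel_gauss:
  assumes c: "0 < c" and s: "0 < s"
  shows "bounded {z. s < gauss c z}"
proof -
  define A where "A = 1 / sqrt (2 * pi * c)"
  have sq: "z\<^sup>2 \<le> 2 * c * A / s" if "s < gauss c z" for z
  proof -
    define u where "u = z\<^sup>2 / (2 * c)"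
    have u: "0 \<le> u" unfolding u_def using c by simp
    have "s < A * exp (- u)" using that c by (simp add: gauss_formula A_def u_def)
    also have "\<dots> \<le> A * (1 / (1 + u))"
    proof (intro mult_left_mono)
      show "exp (- u) \<le> 1 / (1 + u)"
        unfolding exp_minus inverse_eq_divide
        using exp_ge_add_one_self[of u] u by (intro divide_left_mono) auto
    qed (use c in \<open>simp add: A_def\<close>)
    finally have "s + s * u < A" using u by (simp add: pos_less_divide_eq algebra_simps)
    then have "u \<le> A / s" using s by (simp add: pos_le_divide_eq mult.commute)
    then show ?thesis using c s by (simp add: u_def field_simps)
  qed
  show ?thesis unfolding bounded_iff
  proof (intro exI ballI)
    fix z assume "z \<in> {z. s < gauss c z}"
    then have "sqrt (z\<^sup>2) \<le> sqrt (2 * c * A / s)" using sq real_sqrt_le_mono by blast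
    then show "norm z \<le> sqrt (2 * c * A / s)" by simp
  qed
qed

lemma nn_integral_gauss_rescale:
  fixes h :: "real \<Rightarrow> real"
  assumes c: "0 < c" and [measurable]: "h \<in> borel_measurable borel" and nn: "\<And>y. 0 \<le> h y"
  shows "(\<integral>\<^sup>+y. ennreal (h y * gauss c y) \<partial>lborel) = (\<integral>\<^sup>+s. ennreal (h (sqrt c * s) * gauss 1 s) \<partial>lborel)"
proof -
  have scale: "sqrt c * gauss c (sqrt c * s) = gauss 1 s" for s
    using c by (simp add: gauss_formula power_mult_distrib real_sqrt_mult field_simps)
  have "(\<integral>\<^sup>+y. ennreal (h y * gauss c y) \<partial>lborel)
      = \<bar>sqrt c\<bar> * (\<integral>\<^sup>+s. ennreal (h (0 + sqrt c * s) * gauss c (0 + sqrt c * s)) \<partial>lborel)"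
    using c by (intro nn_integral_real_affine) auto
  also have "\<dots> = (\<integral>\<^sup>+s. ennreal (sqrt c) * ennreal (h (sqrt c * s) * gauss c (sqrt c * s)) \<partial>lborel)"
    using c by (subst nn_integral_cmult) auto
  also have "\<dots> = (\<integral>\<^sup>+s. ennreal (h (sqrt c * s) * gauss 1 s) \<partial>lborel)"
    using c nn by (intro nn_integral_cong) (simp add: scale mult.left_commute flip: ennreal_mult)
  finally show ?thesis .
qed

definition log_concave :: "(real \<Rightarrow> real) \<Rightarrow> bool" where
  "log_concave F \<longleftrightarrow>
     (\<forall>x y \<theta>. 0 < \<theta> \<longrightarrow> \<theta> < 1 \<longrightarrow> F x powr (1 - \<theta>) * F y powr \<theta> \<le> F ((1 - \<theta>) * x + \<theta> * y))"

lemma convex_comb_square_le: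
  fixes x y \<theta> :: real
  assumes "0 \<le> \<theta>" "\<theta> \<le> 1"
  shows "((1 - \<theta>) * x + \<theta> * y)\<^sup>2 \<le> (1 - \<theta>) * x\<^sup>2 + \<theta> * y\<^sup>2"
proof -
  have "(1 - \<theta>) * x\<^sup>2 + \<theta> * y\<^sup>2 - ((1 - \<theta>) * x + \<theta> * y)\<^sup>2 = \<theta> * (1 - \<theta>) * (x - y)\<^sup>2"
    by (simp add: power2_eq_square algebra_simps)
  moreover have "0 \<le> \<theta> * (1 - \<theta>) * (x - y)\<^sup>2" using assms by simp
  ultimately show ?thesis by linarith
qed

lemma log_concave_gauss:
  assumes c: "0 < c"
  shows "log_concave (gauss c)"
  unfolding log_concave_def
proof (intro allI impI)
  fix x y \<theta> :: real assume \<theta>: "0 < \<theta>" "\<theta> < 1"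
  define A where "A = 1 / sqrt (2 * pi * c)"
  have A: "0 < A" unfolding A_def using c by simp
  have geo: "(A * exp a) powr (1 - \<theta>) * (A * exp b) powr \<theta> = A * exp ((1 - \<theta>) * a + \<theta> * b)" for a b
  proof -
    have "(A * exp a) powr (1 - \<theta>) * (A * exp b) powr \<theta>
        = exp ((1 - \<theta>) * (ln A + a) + \<theta> * (ln A + b))"
      using A by (simp add: powr_def ln_mult exp_add)
    also have "\<dots> = exp (ln A + ((1 - \<theta>) * a + \<theta> * b))" by (simp add: algebra_simps)
    finally show ?thesis using A by (simp add: exp_add)
  qed
  have "(1 - \<theta>) * (- x\<^sup>2 / (2 * c)) + \<theta> * (- y\<^sup>2 / (2 * c)) = - (((1 - \<theta>) * x\<^sup>2 + \<theta> * y\<^sup>2) / (2 * c))"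
    using c by (simp add: field_simps)
  also have "\<dots> \<le> - (((1 - \<theta>) * x + \<theta> * y)\<^sup>2 / (2 * c))"
    using convex_comb_square_le[of \<theta> x y] \<theta> c by (simp add: divide_right_mono)
  finally show "gauss c x powr (1 - \<theta>) * gauss c y powr \<theta> \<le> gauss c ((1 - \<theta>) * x + \<theta> * y)"
    unfolding gauss_formula[OF c] A_def[symmetric] geo using A by simp
qed

section \<open>The distribution function of a sum of squared Gaussians\<close>

text \<open>For independent centred Gaussians Y_i with variances w_i (i in I), the distribution
  function t \<mapsto> P(sum of the Y_i^2 < t), first as an extended real and then as a real number.\<close>

definition sqsum_cdf_nn :: "('i \<Rightarrow> real) \<Rightarrow> 'i set \<Rightarrow> real \<Rightarrow> ennreal" where
  "sqsum_cdf_nn w I t =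
     (\<integral>\<^sup>+\<omega>. ennreal (indicator {..<t} (\<Sum>i\<in>I. (\<omega> i)\<^sup>2) * (\<Prod>i\<in>I. gauss (w i) (\<omega> i))) \<partial>Pi\<^sub>M I (\<lambda>_. lborel))"

definition sqsum_cdf :: "('i \<Rightarrow> real) \<Rightarrow> 'i set \<Rightarrow> real \<Rightarrow> real" where
  "sqsum_cdf w I t = enn2real (sqsum_cdf_nn w I t)"

interpretation lborel_product: product_sigma_finite "\<lambda>_. lborel" by standard

text \<open>An extra weight depending on
  the j-th coordinate is allowed, as needed for the second moment later on.\<close>

lemma sqsum_cdf_nn_insert_weighted:
  fixes \<phi> :: "real \<Rightarrow> real"
  assumes I: "finite I" "j \<notin> I" and [measurable]: "\<phi> \<in> borel_measurable borel" and nn: "\<And>y. 0 \<le> \<phi> y"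
  shows "(\<integral>\<^sup>+\<omega>. ennreal (\<phi> (\<omega> j) * indicator {..<t} (\<Sum>i\<in>insert j I. (\<omega> i)\<^sup>2)
             * (\<Prod>i\<in>insert j I. gauss (w i) (\<omega> i))) \<partial>Pi\<^sub>M (insert j I) (\<lambda>_. lborel))
       = (\<integral>\<^sup>+y. ennreal (\<phi> y * gauss (w j) y) * sqsum_cdf_nn w I (t - y\<^sup>2) \<partial>lborel)"
proof -
  have split: "ennreal (\<phi> ((x(j := y)) j) * indicator {..<t} (\<Sum>i\<in>insert j I. ((x(j := y)) i)\<^sup>2)
                  * (\<Prod>i\<in>insert j I. gauss (w i) ((x(j := y)) i)))
      = ennreal (\<phi> y * gauss (w j) y)
        * ennreal (indicator {..<t - y\<^sup>2} (\<Sum>i\<in>I. (x i)\<^sup>2) * (\<Prod>i\<in>I. gauss (w i) (x i)))"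
    for x :: "'a \<Rightarrow> real" and y :: real
  proof -
    have "(\<Sum>i\<in>I. ((x(j := y)) i)\<^sup>2) = (\<Sum>i\<in>I. (x i)\<^sup>2)"
      "(\<Prod>i\<in>I. gauss (w i) ((x(j := y)) i)) = (\<Prod>i\<in>I. gauss (w i) (x i))"
      using I by (auto intro!: sum.cong prod.cong)
    moreover have "indicator {..<t} (y\<^sup>2 + (\<Sum>i\<in>I. (x i)\<^sup>2)) = (indicator {..<t - y\<^sup>2} (\<Sum>i\<in>I. (x i)\<^sup>2) :: real)"
      by (auto simp: indicator_def)
    ultimately show ?thesis using I nn
      by (simp add: ennreal_mult'[symmetric] prod_nonneg mult_ac)
  qed
  have "(\<integral>\<^sup>+\<omega>. ennreal (\<phi> (\<omega> j) * indicator {..<t} (\<Sum>i\<in>insert j I. (\<omega> i)\<^sup>2)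
             * (\<Prod>i\<in>insert j I. gauss (w i) (\<omega> i))) \<partial>Pi\<^sub>M (insert j I) (\<lambda>_. lborel))
     = (\<integral>\<^sup>+y. (\<integral>\<^sup>+x. ennreal (\<phi> ((x(j := y)) j) * indicator {..<t} (\<Sum>i\<in>insert j I. ((x(j := y)) i)\<^sup>2)
             * (\<Prod>i\<in>insert j I. gauss (w i) ((x(j := y)) i))) \<partial>Pi\<^sub>M I (\<lambda>_. lborel)) \<partial>lborel)"
    using I by (subst lborel_product.product_nn_integral_insert_rev) auto
  also have "\<dots> = (\<integral>\<^sup>+y. ennreal (\<phi> y * gauss (w j) y) * sqsum_cdf_nn w I (t - y\<^sup>2) \<partial>lborel)"
    unfolding split sqsum_cdf_nn_def by (intro nn_integral_cong) (simp add: nn_integral_cmult)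
  finally show ?thesis .
qed

lemma sqsum_cdf_nn_le_1:
  assumes I: "finite I" and w: "\<And>i. i \<in> I \<Longrightarrow> 0 < w i"
  shows "sqsum_cdf_nn w I t \<le> 1"
proof -
  have "sqsum_cdf_nn w I t \<le> (\<integral>\<^sup>+\<omega>. (\<Prod>i\<in>I. ennreal (gauss (w i) (\<omega> i))) \<partial>Pi\<^sub>M I (\<lambda>_. lborel))"
    unfolding sqsum_cdf_nn_def
    by (intro nn_integral_mono) (simp add: prod_ennreal prod_nonneg ennreal_leI indicator_def)
  also have "\<dots> = (\<Prod>i\<in>I. (\<integral>\<^sup>+x. ennreal (gauss (w i) x) \<partial>lborel))"
    using I by (subst lborel_product.product_nn_integral_prod) auto
  also have "\<dots> = 1" using w by (simp add: nn_integral_gauss)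
  finally show ?thesis .
qed

lemma sqsum_cdf_nn_mono:
  assumes "s \<le> t" shows "sqsum_cdf_nn w I s \<le> sqsum_cdf_nn w I t"
  unfolding sqsum_cdf_nn_def
  by (intro nn_integral_mono ennreal_leI mult_right_mono)
     (use assms in \<open>auto simp: indicator_def prod_nonneg\<close>)

lemma sqsum_cdf_nn_eq:
  assumes "finite I" "\<And>i. i \<in> I \<Longrightarrow> 0 < w i"
  shows "sqsum_cdf_nn w I t = ennreal (sqsum_cdf w I t)"
proof -
  have "sqsum_cdf_nn w I t < top"
    using sqsum_cdf_nn_le_1[of I w t] assms by (simp add: le_less_trans)
  then show ?thesis unfolding sqsum_cdf_def by (simp add: less_top)
qed

lemma sqsum_cdf_nonneg: "0 \<le> sqsum_cdf w I t"
  by (simp add: sqsum_cdf_def)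

lemma sqsum_cdf_le_1:
  assumes "finite I" "\<And>i. i \<in> I \<Longrightarrow> 0 < w i"
  shows "sqsum_cdf w I t \<le> 1"
  using sqsum_cdf_nn_le_1[of I w t] assms unfolding sqsum_cdf_def by (simp add: enn2real_leI)

lemma sqsum_cdf_mono:
  assumes "finite I" "\<And>i. i \<in> I \<Longrightarrow> 0 < w i"
  shows "mono (sqsum_cdf w I)"
  using sqsum_cdf_nn_mono[where w = w and I = I] sqsum_cdf_nn_eq[OF assms]
  by (simp add: mono_def sqsum_cdf_nonneg)

lemma sqsum_cdf_measurable:
  assumes "finite I" "\<And>i. i \<in> I \<Longrightarrow> 0 < w i"
  shows "sqsum_cdf w I \<in> borel_measurable borel"
  using sqsum_cdf_mono[OF assms] by (rule borel_measurable_mono)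

lemma sqsum_cdf_cong:
  assumes "\<And>i. i \<in> I \<Longrightarrow> w i = w' i"
  shows "sqsum_cdf w I = sqsum_cdf w' I"
  unfolding sqsum_cdf_def sqsum_cdf_nn_def using assms
  by (intro ext arg_cong[where f = enn2real] nn_integral_cong) (auto intro!: prod.cong)

lemma sqsum_cdf_empty: "sqsum_cdf w {} t = (if 0 < t then 1 else 0)"
  unfolding sqsum_cdf_def sqsum_cdf_nn_def by (simp add: PiM_empty nn_integral_count_space_finite)

lemma sqsum_cdf_insert:
  assumes I: "finite I" "j \<notin> I" and w: "\<And>i. i \<in> insert j I \<Longrightarrow> 0 < w i"
  shows "sqsum_cdf w (insert j I) t = (\<integral>y. gauss (w j) y * sqsum_cdf w I (t - y\<^sup>2) \<partial>lborel)"
proof -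
  have wI: "\<And>i. i \<in> I \<Longrightarrow> 0 < w i" using w by auto
  note [measurable] = sqsum_cdf_measurable[OF I(1) wI]
  have "sqsum_cdf_nn w (insert j I) t = (\<integral>\<^sup>+y. ennreal (gauss (w j) y) * sqsum_cdf_nn w I (t - y\<^sup>2) \<partial>lborel)"
    using sqsum_cdf_nn_insert_weighted[OF I, of "\<lambda>_. 1" t w] unfolding sqsum_cdf_nn_def by simp
  also have "\<dots> = (\<integral>\<^sup>+y. ennreal (gauss (w j) y * sqsum_cdf w I (t - y\<^sup>2)) \<partial>lborel)"
    by (intro nn_integral_cong) (simp add: sqsum_cdf_nn_eq[OF I(1) wI] ennreal_mult sqsum_cdf_nonneg)
  finally show ?thesis
    unfolding sqsum_cdf_def[of w "insert j I" t]
    by (simp add: integral_eq_nn_integral sqsum_cdf_nonneg)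
qed

lemma log_concave_indicator_pos: "log_concave (\<lambda>t. if 0 < t then 1 else 0)"
  unfolding log_concave_def
proof (intro allI impI)
  fix x y \<theta> :: real assume \<theta>: "0 < \<theta>" "\<theta> < 1"
  have "0 < (1 - \<theta>) * x + \<theta> * y" if "0 < x" "0 < y"
    using \<theta> that by (intro add_pos_pos mult_pos_pos) auto
  then show "(if 0 < x then 1 else 0) powr (1 - \<theta>) * (if 0 < y then 1 else 0) powr \<theta>
      \<le> (if 0 < (1 - \<theta>) * x + \<theta> * y then 1 else (0 :: real))"
    by auto
qed

text \<open>The induction step integrates G(t - y^2) against a Gaussian weight in y.  The integrand is
  log-concave jointly in (t, y), because t - y^2 is concave and G is nondecreasing and
  log-concave; the Prekopa-Leindler inequality then shows that integrating out y preserves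
  log-concavity in t.\<close>

lemma log_concave_slice_integrand:
  fixes G :: "real \<Rightarrow> real" and \<theta> c x y t0 t1 :: real
  assumes c: "0 < c" and G: "log_concave G" "mono G" "\<And>t. 0 \<le> G t" and \<theta>: "0 < \<theta>" "\<theta> < 1"
  shows "(gauss c x * G (t0 - x\<^sup>2)) powr (1 - \<theta>) * (gauss c y * G (t1 - y\<^sup>2)) powr \<theta>
         \<le> gauss c ((1 - \<theta>) * x + \<theta> * y) * G (((1 - \<theta>) * t0 + \<theta> * t1) - ((1 - \<theta>) * x + \<theta> * y)\<^sup>2)"
proof -
  define z where "z = (1 - \<theta>) * x + \<theta> * y"
  have "G (t0 - x\<^sup>2) powr (1 - \<theta>) * G (t1 - y\<^sup>2) powr \<theta> \<le> G ((1 - \<theta>) * (t0 - x\<^sup>2) + \<theta> * (t1 - y\<^sup>2))"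
    using G(1) \<theta> unfolding log_concave_def by blast
  also have "\<dots> \<le> G (((1 - \<theta>) * t0 + \<theta> * t1) - z\<^sup>2)"
    using convex_comb_square_le[of \<theta> x y] \<theta> G(2) unfolding z_def
    by (intro monoD[OF G(2)]) (simp add: algebra_simps)
  finally have G_ineq: "G (t0 - x\<^sup>2) powr (1 - \<theta>) * G (t1 - y\<^sup>2) powr \<theta> \<le> G (((1 - \<theta>) * t0 + \<theta> * t1) - z\<^sup>2)" .
  have gauss_ineq: "gauss c x powr (1 - \<theta>) * gauss c y powr \<theta> \<le> gauss c z"
    using log_concave_gauss[OF c] \<theta> unfolding log_concave_def z_def by blast
  have "(gauss c x * G (t0 - x\<^sup>2)) powr (1 - \<theta>) * (gauss c y * G (t1 - y\<^sup>2)) powr \<theta>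
      = (gauss c x powr (1 - \<theta>) * gauss c y powr \<theta>) * (G (t0 - x\<^sup>2) powr (1 - \<theta>) * G (t1 - y\<^sup>2) powr \<theta>)"
    using G(3) by (simp add: powr_mult mult_ac)
  also have "\<dots> \<le> gauss c z * G (((1 - \<theta>) * t0 + \<theta> * t1) - z\<^sup>2)"
    using gauss_ineq G_ineq G(3) by (intro mult_mono) auto
  finally show ?thesis unfolding z_def .
qed

lemma log_concave_gauss_smoothing:
  fixes G :: "real \<Rightarrow> real" and c :: real
  assumes c: "0 < c"
    and G: "log_concave G" "mono G" "\<And>t. 0 \<le> G t" "\<And>t. G t \<le> 1"
    and [measurable]: "G \<in> borel_measurable borel"
  shows "log_concave (\<lambda>t. \<integral>y. gauss c y * G (t - y\<^sup>2) \<partial>lborel)"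
  unfolding log_concave_def
proof (intro allI impI)
  fix t0 t1 \<theta> :: real assume \<theta>: "0 < \<theta>" "\<theta> < 1"
  define F where "F t y = gauss c y * G (t - y\<^sup>2)" for t y
  have [measurable]: "F t \<in> borel_measurable borel" for t unfolding F_def by measurable
  have F_nonneg: "0 \<le> F t y" and F_le: "F t y \<le> gauss c y" for t y
    unfolding F_def using G(3,4)[of "t - y\<^sup>2"] by (auto simp: mult_left_le)
  have F_bdd: "bdd_above (range (F t))" for t
    using F_le gauss_le[OF c] by (intro bdd_aboveI[of _ "1 / sqrt (2 * pi * c)"]) (auto intro: order_trans)
  have F_lvl: "bounded {y. s < F t y}" if "0 < s" for s t
    by (rule bounded_subset[OF bounded_superlevel_gauss[OF c that]]) (use F_le in \<open>auto intro: less_le_trans\<close>)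
  have F_int: "integrable lborel (F t)" for t
    using F_nonneg F_le by (intro Bochner_Integration.integrable_bound[OF integrable_gauss[OF c]]) auto
  show "(\<integral>y. F t0 y \<partial>lborel) powr (1 - \<theta>) * (\<integral>y. F t1 y \<partial>lborel) powr \<theta>
        \<le> (\<integral>y. F ((1 - \<theta>) * t0 + \<theta> * t1) y \<partial>lborel)"
    using log_concave_slice_integrand[OF c G(1-3) \<theta>] unfolding F_def[symmetric]
    by (intro prekopa_leindler_1d[OF \<theta>] F_nonneg F_bdd F_lvl F_int) auto
qed

lemma log_concave_sqsum_cdf:
  assumes "finite I" "\<And>i. i \<in> I \<Longrightarrow> 0 < w i"
  shows "log_concave (sqsum_cdf w I)"
  using assms
proof (induction I rule: finite_induct)
  case empty
  then show ?case using log_concave_indicator_pos by (simp add: sqsum_cdf_empty[abs_def])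
next
  case (insert j I)
  then have w: "\<And>i. i \<in> I \<Longrightarrow> 0 < w i" and wj: "0 < w j" by auto
  have "log_concave (\<lambda>t. \<integral>y. gauss (w j) y * sqsum_cdf w I (t - y\<^sup>2) \<partial>lborel)"
    using insert.IH[OF w] sqsum_cdf_mono[OF insert.hyps(1) w] sqsum_cdf_le_1[OF insert.hyps(1) w]
      sqsum_cdf_measurable[OF insert.hyps(1) w] sqsum_cdf_nonneg
    by (intro log_concave_gauss_smoothing[OF wj]) auto
  then show ?case
    using sqsum_cdf_insert[OF insert.hyps(1,2) insert.prems] by (simp add: fun_eq_iff[symmetric])
qed

section \<open>Monotonicity of the ratio of one-dimensional moments\<close>

text \<open>Writing x2 and x3 as complementary convex combinations of x1 and x2 + x3 - x1 reduces this to
  log-concavity, and monotonicity handles x4 \<le> x2 + x3 - x1.\<close>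

lemma log_concave_cross:
  fixes G :: "real \<Rightarrow> real"
  assumes lc: "log_concave G" and mono: "mono G" and nn: "\<And>x. 0 \<le> G x"
    and le: "x1 \<le> x2" "x1 \<le> x3" "x2 \<le> x4" "x3 \<le> x4" and sum: "x1 + x4 \<le> x2 + x3"
  shows "G x1 * G x4 \<le> G x2 * G x3"
proof -
  define y where "y = x2 + x3 - x1"
  have "G x1 * G x4 \<le> G x1 * G y"
    using sum nn by (intro mult_left_mono monoD[OF mono]) (auto simp: y_def)
  also have "G x1 * G y \<le> G x2 * G x3"
  proof (cases "x2 = x1 \<or> x3 = x1")
    case True
    then show ?thesis by (auto simp: y_def mult.commute)
  next
    case False
    then have lt: "x1 < x2" "x1 < x3" using le by auto
    define \<theta> where "\<theta> = (x2 - x1) / (y - x1)"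
    have \<theta>: "0 < \<theta>" "\<theta> < 1" unfolding \<theta>_def y_def using lt by (auto simp: field_simps)
    have "\<theta> * (y - x1) = x2 - x1" unfolding \<theta>_def y_def using lt by simp
    then have x2: "x2 = (1 - \<theta>) * x1 + \<theta> * y" and x3: "x3 = (1 - (1 - \<theta>)) * x1 + (1 - \<theta>) * y"
      by (simp_all add: algebra_simps y_def)
    have "G x1 powr (1 - \<theta>) * G y powr \<theta> \<le> G x2"
      using lc \<theta> unfolding log_concave_def x2 by blast
    moreover have "G x1 powr (1 - (1 - \<theta>)) * G y powr (1 - \<theta>) \<le> G x3"
      using lc[unfolded log_concave_def, rule_format, of "1 - \<theta>" x1 y] \<theta> unfolding x3 by simp
    ultimately have "(G x1 powr (1 - \<theta>) * G y powr \<theta>) * (G x1 powr (1 - (1 - \<theta>)) * G y powr (1 - \<theta>))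
        \<le> G x2 * G x3"
      by (intro mult_mono) (auto simp: nn)
    moreover have "(G x1 powr (1 - \<theta>) * G y powr \<theta>) * (G x1 powr (1 - (1 - \<theta>)) * G y powr (1 - \<theta>))
        = (G x1 powr (1 - \<theta>) * G x1 powr \<theta>) * (G y powr \<theta> * G y powr (1 - \<theta>))"
      by (simp add: mult_ac)
    moreover have "G x1 powr (1 - \<theta>) * G x1 powr \<theta> = G x1" "G y powr \<theta> * G y powr (1 - \<theta>) = G y"
      using nn[of x1] nn[of y] by (simp_all flip: powr_add)
    ultimately show ?thesis by simp
  qed
  finally show ?thesis .
qed

text \<open>The resulting total-positivity inequality for the kernel (c, u) \<mapsto> G(\<rho> - c u):
  increasing the variance parameter from a to b penalises large u = s^2 more.\<close>

lemma log_concave_tp2: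
  fixes G :: "real \<Rightarrow> real"
  assumes lc: "log_concave G" and mono: "mono G" and nn: "\<And>x. 0 \<le> G x"
    and uv: "u \<le> v" "0 \<le> u" and ab: "0 \<le> a" "a \<le> b"
  shows "G (\<rho> - b * v) * G (\<rho> - a * u) \<le> G (\<rho> - b * u) * G (\<rho> - a * v)"
proof (rule log_concave_cross[OF lc mono nn])
  show "\<rho> - b * v \<le> \<rho> - b * u" "\<rho> - a * v \<le> \<rho> - a * u"
    using uv ab by (auto intro: mult_left_mono)
  show "\<rho> - b * v \<le> \<rho> - a * v" "\<rho> - b * u \<le> \<rho> - a * u"
    using uv ab by (auto intro: mult_right_mono)
  have "0 \<le> (b - a) * (v - u)" using uv ab by simp
  then show "\<rho> - b * v + (\<rho> - a * u) \<le> \<rho> - b * u + (\<rho> - a * v)"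
    by (simp add: algebra_simps)
qed

lemma nn_integral_times_iterated:
  fixes f g :: "real \<Rightarrow> real"
  assumes [measurable]: "f \<in> borel_measurable borel" "g \<in> borel_measurable borel"
    and "\<And>x. 0 \<le> f x" "\<And>x. 0 \<le> g x"
  shows "(\<integral>\<^sup>+s. ennreal (f s) \<partial>lborel) * (\<integral>\<^sup>+r. ennreal (g r) \<partial>lborel)
       = (\<integral>\<^sup>+s. \<integral>\<^sup>+r. ennreal (f s * g r) \<partial>lborel \<partial>lborel)"
  using assms(3,4)
  by (simp add: nn_integral_multc nn_integral_cmult ennreal_mult' flip: nn_integral_multc)

text \<open>Symmetrisation: an inequality between two double integrals follows from the pointwise
  inequality between the symmetrised integrands, since swapping the variables does not change
  either double integral (Fubini).\<close>

lemma nn_integral_symmetrize_le: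
  fixes P Q :: "real \<Rightarrow> real \<Rightarrow> real"
  assumes [measurable]: "case_prod P \<in> borel_measurable (lborel \<Otimes>\<^sub>M lborel)"
      "case_prod Q \<in> borel_measurable (lborel \<Otimes>\<^sub>M lborel)"
    and nn: "\<And>s r. 0 \<le> P s r" "\<And>s r. 0 \<le> Q s r"
    and sym: "\<And>s r. P s r + P r s \<le> Q s r + Q r s"
  shows "(\<integral>\<^sup>+s. \<integral>\<^sup>+r. ennreal (P s r) \<partial>lborel \<partial>lborel) \<le> (\<integral>\<^sup>+s. \<integral>\<^sup>+r. ennreal (Q s r) \<partial>lborel \<partial>lborel)"
proof -
  have swap: "(\<integral>\<^sup>+s. \<integral>\<^sup>+r. ennreal (R r s) \<partial>lborel \<partial>lborel) = (\<integral>\<^sup>+s. \<integral>\<^sup>+r. ennreal (R s r) \<partial>lborel \<partial>lborel)"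
    if [measurable]: "case_prod R \<in> borel_measurable (lborel \<Otimes>\<^sub>M lborel)" for R :: "real \<Rightarrow> real \<Rightarrow> real"
    using lborel_pair.Fubini'[where f = "\<lambda>x y. ennreal (R x y)"] by simp
  have sum: "(\<integral>\<^sup>+s. \<integral>\<^sup>+r. ennreal (R s r) \<partial>lborel \<partial>lborel) + (\<integral>\<^sup>+s. \<integral>\<^sup>+r. ennreal (R r s) \<partial>lborel \<partial>lborel)
      = (\<integral>\<^sup>+s. \<integral>\<^sup>+r. ennreal (R s r + R r s) \<partial>lborel \<partial>lborel)"
    if [measurable]: "case_prod R \<in> borel_measurable (lborel \<Otimes>\<^sub>M lborel)" and "\<And>s r. 0 \<le> R s r"
    for R :: "real \<Rightarrow> real \<Rightarrow> real"
    using that(2) by (simp add: nn_integral_add[symmetric])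
  have "2 * (\<integral>\<^sup>+s. \<integral>\<^sup>+r. ennreal (P s r) \<partial>lborel \<partial>lborel)
      = (\<integral>\<^sup>+s. \<integral>\<^sup>+r. ennreal (P s r + P r s) \<partial>lborel \<partial>lborel)"
    by (simp add: mult_2 flip: sum[of P, OF _ nn(1)] swap[of P])
  also have "\<dots> \<le> (\<integral>\<^sup>+s. \<integral>\<^sup>+r. ennreal (Q s r + Q r s) \<partial>lborel \<partial>lborel)"
    by (intro nn_integral_mono ennreal_leI sym)
  also have "\<dots> = 2 * (\<integral>\<^sup>+s. \<integral>\<^sup>+r. ennreal (Q s r) \<partial>lborel \<partial>lborel)"
    by (simp add: mult_2 flip: sum[of Q, OF _ nn(2)] swap[of Q])
  finally show ?thesis by (subst (asm) ennreal_mult_le_mult_iff) auto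
qed

text \<open>The one-dimensional integrals to which the expectation reduces: the k-th moment of the
  standard normal weight tilted by G(\<rho> - c s^2).\<close>

definition slice_moment :: "(real \<Rightarrow> real) \<Rightarrow> real \<Rightarrow> nat \<Rightarrow> real \<Rightarrow> ennreal" where
  "slice_moment G \<rho> k c = (\<integral>\<^sup>+s. ennreal (s ^ k * gauss 1 s * G (\<rho> - c * s\<^sup>2)) \<partial>lborel)"

text \<open>The slice moments are finite, since G is bounded and the normal density has all moments.\<close>

lemma slice_moment_finite:
  assumes "\<And>t. 0 \<le> G t" "\<And>t. G t \<le> 1"
  shows "slice_moment G \<rho> k c < \<infinity>"
proof -
  have "s ^ k * gauss 1 s * G (\<rho> - c * s\<^sup>2) \<le> gauss 1 s * \<bar>s\<bar> ^ k" for s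
  proof -
    have "s ^ k * gauss 1 s * G (\<rho> - c * s\<^sup>2) \<le> \<bar>s\<bar> ^ k * gauss 1 s * 1"
      using assms[of "\<rho> - c * s\<^sup>2"] by (intro mult_mono) (auto simp flip: power_abs)
    then show ?thesis by (simp add: mult.commute)
  qed
  then have "slice_moment G \<rho> k c \<le> (\<integral>\<^sup>+s. ennreal (gauss 1 s * \<bar>s\<bar> ^ k) \<partial>lborel)"
    unfolding slice_moment_def by (intro nn_integral_mono ennreal_leI)
  also have "\<dots> = ennreal (\<integral>s. gauss 1 s * \<bar>s\<bar> ^ k \<partial>lborel)"
    using integrable_std_normal_moment_abs[of k] by (intro nn_integral_eq_integral) (auto simp: gauss_def)
  finally show ?thesis by (simp add: le_less_trans)
qed

text \<open>The integrands of both sides, as functions of (s, r), differ after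
  symmetrisation by a nonnegative multiple of (s^2 - r^2) times the expression controlled by
  the total-positivity inequality.\<close>

lemma slice_moment_cross:
  fixes G :: "real \<Rightarrow> real" and a b \<rho> :: real
  assumes lc: "log_concave G" and mono: "mono G" and nn: "\<And>x. 0 \<le> G x"
    and [measurable]: "G \<in> borel_measurable borel" and ab: "0 \<le> a" "a \<le> b"
  shows "slice_moment G \<rho> 2 b * slice_moment G \<rho> 0 a \<le> slice_moment G \<rho> 2 a * slice_moment G \<rho> 0 b"
proof -
  define K where "K c s = gauss 1 s * G (\<rho> - c * s\<^sup>2)" for c s
  have [measurable]: "K c \<in> borel_measurable borel" for c unfolding K_def by measurable
  have K_nonneg: "0 \<le> K c s" for c s unfolding K_def using nn by simp
  define P where "P s r = s\<^sup>2 * K b s * K a r" for s r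
  define Q where "Q s r = s\<^sup>2 * K a s * K b r" for s r
  have sm: "slice_moment G \<rho> k c = (\<integral>\<^sup>+s. ennreal (s ^ k * K c s) \<partial>lborel)" for k c
    unfolding slice_moment_def K_def by (simp add: mult.assoc)
  have moment: "slice_moment G \<rho> 2 c * slice_moment G \<rho> 0 c'
      = (\<integral>\<^sup>+s. \<integral>\<^sup>+r. ennreal (s\<^sup>2 * K c s * K c' r) \<partial>lborel \<partial>lborel)" for c c'
    unfolding sm using nn_integral_times_iterated[of "\<lambda>s. s\<^sup>2 * K c s" "K c'"] K_nonneg by simp
  have "P s r + P r s \<le> Q s r + Q r s" for s r
  proof -
    have "0 \<le> (s\<^sup>2 - r\<^sup>2) * (K a s * K b r - K b s * K a r)"
    proof (cases "r\<^sup>2 \<le> s\<^sup>2")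
      case True
      have "G (\<rho> - b * s\<^sup>2) * G (\<rho> - a * r\<^sup>2) \<le> G (\<rho> - b * r\<^sup>2) * G (\<rho> - a * s\<^sup>2)"
        using log_concave_tp2[OF lc mono nn True _ ab] by simp
      then have "K b s * K a r \<le> K a s * K b r"
        unfolding K_def by (simp add: mult_left_mono mult_ac)
      then show ?thesis using True by simp
    next
      case False
      have "G (\<rho> - b * r\<^sup>2) * G (\<rho> - a * s\<^sup>2) \<le> G (\<rho> - b * s\<^sup>2) * G (\<rho> - a * r\<^sup>2)"
        using log_concave_tp2[OF lc mono nn _ _ ab, of "s\<^sup>2" "r\<^sup>2"] False by simp
      then have "K a s * K b r \<le> K b s * K a r"
        unfolding K_def by (simp add: mult_left_mono mult_ac)
      then show ?thesis using False by (intro mult_nonpos_nonpos) auto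
    qed
    moreover have "Q s r + Q r s - (P s r + P r s) = (s\<^sup>2 - r\<^sup>2) * (K a s * K b r - K b s * K a r)"
      unfolding P_def Q_def by (simp add: algebra_simps)
    ultimately show ?thesis by linarith
  qed
  then have "(\<integral>\<^sup>+s. \<integral>\<^sup>+r. ennreal (P s r) \<partial>lborel \<partial>lborel) \<le> (\<integral>\<^sup>+s. \<integral>\<^sup>+r. ennreal (Q s r) \<partial>lborel \<partial>lborel)"
    by (intro nn_integral_symmetrize_le) (auto simp: P_def Q_def K_nonneg)
  then show ?thesis unfolding moment P_def Q_def .
qed

lemma slice_moment_ratio_antitone:
  fixes G :: "real \<Rightarrow> real" and a b \<rho> :: real
  assumes lc: "log_concave G" and mono: "mono G" and nn: "\<And>x. 0 \<le> G x" and le1: "\<And>x. G x \<le> 1"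
    and [measurable]: "G \<in> borel_measurable borel" and ab: "0 \<le> a" "a \<le> b"
  shows "enn2real (slice_moment G \<rho> 2 b) / enn2real (slice_moment G \<rho> 0 b)
         \<le> enn2real (slice_moment G \<rho> 2 a) / enn2real (slice_moment G \<rho> 0 a)"
proof -
  define N D where "N c = enn2real (slice_moment G \<rho> 2 c)" "D c = enn2real (slice_moment G \<rho> 0 c)" for c
  have eq: "slice_moment G \<rho> 2 c = ennreal (N c)" "slice_moment G \<rho> 0 c = ennreal (D c)" for c
    unfolding N_D_def using slice_moment_finite[OF nn le1] by (simp_all add: less_top)
  have ND0: "0 \<le> N c" "0 \<le> D c" for c unfolding N_D_def by simp_all
  have "ennreal (N b) * ennreal (D a) \<le> ennreal (N a) * ennreal (D b)"
    using slice_moment_cross[OF lc mono nn _ ab, of \<rho>] unfolding eq by simp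
  then have cross: "N b * D a \<le> N a * D b"
    using ND0 by (simp add: ennreal_mult'[symmetric] del: ennreal_mult')
  have "slice_moment G \<rho> 0 b \<le> slice_moment G \<rho> 0 a"
    unfolding slice_moment_def using ab
    by (intro nn_integral_mono ennreal_leI mult_left_mono monoD[OF mono]) (auto intro: mult_right_mono)
  then have D_mono: "D b \<le> D a" unfolding eq using ND0 by simp
  show ?thesis
  proof (cases "D b = 0")
    case True
    then show ?thesis using ND0 by (simp add: N_D_def[symmetric])
  next
    case False
    then have "0 < D b" using ND0[of b] by linarith
    moreover have "0 < D a" using calculation D_mono by linarith
    ultimately show ?thesis using cross unfolding N_D_def[symmetric] by (simp add: divide_simps mult.commute)
  qed
qed

section \<open>Reduction of the truncated normal expectation\<close>

lemma gauss_eq_powr: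
  assumes c: "0 < c"
  shows "c powr (-1/2) * std_normal_density (c powr (-1/2) * z) = gauss c z"
proof -
  have p: "c powr (-1/2) = 1 / sqrt c" using c by (simp add: powr_minus_divide powr_half_sqrt)
  have "(z / sqrt c)\<^sup>2 = z\<^sup>2 / c" using c by (simp add: power_divide)
  then show ?thesis using c unfolding p std_normal_density_def gauss_formula[OF c]
    by (simp add: real_sqrt_mult field_simps)
qed

lemma tn_dens_eq:
  assumes "\<And>m. 0 < L m"
  shows "tn_dens \<rho> L x = indicator {..<\<rho>} (x \<bullet> x) * (\<Prod>m\<in>UNIV. gauss (L m) (x $ m))"
  using gauss_eq_powr[OF assms] unfolding tn_dens_def by (simp add: indicator_def)

lemma tn_dens_measurable [measurable]:
  assumes "\<And>m. 0 < L m"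
  shows "tn_dens \<rho> L \<in> borel_measurable borel"
  unfolding tn_dens_eq[OF assms, abs_def] by measurable

lemma tn_dens_nonneg: "(\<And>m. 0 < L m) \<Longrightarrow> 0 \<le> tn_dens \<rho> L x"
  by (simp add: tn_dens_eq prod_nonneg)

definition basis_index :: "real^'n::finite \<Rightarrow> 'n" where
  "basis_index = inv (\<lambda>i. axis i 1)"

lemma inj_axis_1: "inj (\<lambda>i::'n::finite. axis i (1::real))"
  by (auto simp: inj_def axis_eq_axis)

lemma basis_index_axis [simp]: "basis_index (axis i 1) = i"
  unfolding basis_index_def by (metis inj_axis_1 inv_f_f)

lemma Basis_vec_axis: "(Basis :: (real^'n::finite) set) = range (\<lambda>i. axis i 1)"
  by (auto simp: Basis_vec_def)

lemma basis_index_off_axis: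
  "b \<in> (Basis :: (real^'n::finite) set) - {axis n 1} \<Longrightarrow> basis_index b \<noteq> n"
  by (auto simp: Basis_vec_axis)

lemma tn_dens_Basis_coords:
  fixes f :: "real^'n::finite \<Rightarrow> real"
  assumes L: "\<And>m. 0 < L m"
  defines "x \<equiv> (\<Sum>b\<in>Basis. f b *\<^sub>R b :: real^'n)"
  shows "x $ m = f (axis m 1)"
    and "tn_dens \<rho> L x = indicator {..<\<rho>} (\<Sum>b\<in>Basis. (f b)\<^sup>2) * (\<Prod>b\<in>Basis. gauss (L (basis_index b)) (f b))"
proof -
  have coord: "x \<bullet> b = f b" if "b \<in> Basis" for b
    using that by (simp add: x_def inner_sum_left inner_Basis if_distrib sum.delta cong: if_cong)
  then show "x $ m = f (axis m 1)" by (simp add: cart_eq_inner_axis Basis_vec_axis)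
  have "x \<bullet> x = (\<Sum>b\<in>Basis. (f b)\<^sup>2)"
    using coord by (simp add: euclidean_inner[of x x] power2_eq_square)
  moreover have "(\<Prod>m\<in>UNIV. gauss (L m) (x $ m)) = (\<Prod>b\<in>Basis. gauss (L (basis_index b)) (f b))"
    using coord unfolding Basis_vec_axis
    by (subst prod.reindex[OF inj_axis_1]) (simp add: cart_eq_inner_axis)
  ultimately show "tn_dens \<rho> L x = indicator {..<\<rho>} (\<Sum>b\<in>Basis. (f b)\<^sup>2) * (\<Prod>b\<in>Basis. gauss (L (basis_index b)) (f b))"
    by (simp add: tn_dens_eq[OF L])
qed

text \<open>Fubini in the n-th coordinate: the other coordinates are independent Gaussians, and
  the truncation becomes a condition on their squared sum.\<close>

lemma nn_integral_tn_dens_coordinate: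
  fixes L :: "'n::finite \<Rightarrow> real" and \<phi> :: "real \<Rightarrow> real" and n :: 'n
  assumes L: "\<And>m. 0 < L m" and [measurable]: "\<phi> \<in> borel_measurable borel" and nn: "\<And>y. 0 \<le> \<phi> y"
  shows "(\<integral>\<^sup>+x. ennreal (\<phi> (x $ n) * tn_dens \<rho> L x) \<partial>lborel)
       = (\<integral>\<^sup>+y. ennreal (\<phi> y * gauss (L n) y)
            * sqsum_cdf_nn (L \<circ> basis_index) (Basis - {axis n 1}) (\<rho> - y\<^sup>2) \<partial>lborel)"
proof -
  define e :: "real^'n" where "e = axis n 1"
  have ins: "insert e (Basis - {e}) = Basis" unfolding e_def by (auto simp: Basis_vec_axis)
  have [measurable]: "tn_dens \<rho> L \<in> borel_measurable borel" using L by measurable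
  have "(\<integral>\<^sup>+x. ennreal (\<phi> (x $ n) * tn_dens \<rho> L x) \<partial>lborel)
      = (\<integral>\<^sup>+f. ennreal (\<phi> ((\<Sum>b\<in>Basis. f b *\<^sub>R b :: real^'n) $ n) * tn_dens \<rho> L (\<Sum>b\<in>Basis. f b *\<^sub>R b))
           \<partial>(\<Pi>\<^sub>M b\<in>Basis. lborel))"
    by (subst lborel_eq) (simp add: nn_integral_distr)
  also have "\<dots> = (\<integral>\<^sup>+f. ennreal (\<phi> (f e) * indicator {..<\<rho>} (\<Sum>b\<in>insert e (Basis - {e}). (f b)\<^sup>2)
           * (\<Prod>b\<in>insert e (Basis - {e}). gauss ((L \<circ> basis_index) b) (f b))) \<partial>(\<Pi>\<^sub>M b\<in>insert e (Basis - {e}). lborel))"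
    unfolding ins tn_dens_Basis_coords[OF L] by (simp add: e_def mult.assoc)
  also have "\<dots> = (\<integral>\<^sup>+y. ennreal (\<phi> y * gauss (L n) y)
            * sqsum_cdf_nn (L \<circ> basis_index) (Basis - {e}) (\<rho> - y\<^sup>2) \<partial>lborel)"
    by (subst sqsum_cdf_nn_insert_weighted) (auto simp: nn e_def)
  finally show ?thesis unfolding e_def .
qed

text \<open>After the substitution x_n = sqrt(lam_n) s, the even moments of the n-th coordinate under
  the unnormalised density are slice moments of the distribution function of the other
  coordinates.\<close>

lemma nn_integral_tn_dens_slice:
  fixes L :: "'n::finite \<Rightarrow> real" and n :: 'n and k :: nat
  assumes L: "\<And>m. 0 < L m" and k: "even k"
  shows "(\<integral>\<^sup>+x. ennreal ((x $ n) ^ k * tn_dens \<rho> L x) \<partial>lborel)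
       = ennreal (sqrt (L n) ^ k)
         * slice_moment (sqsum_cdf (L \<circ> basis_index) (Basis - {axis n 1})) \<rho> k (L n)"
proof -
  define G where "G = sqsum_cdf (L \<circ> basis_index) (Basis - {axis n 1 :: real^'n})"
  have w: "0 < (L \<circ> basis_index) b" for b using L by simp
  have [measurable]: "G \<in> borel_measurable borel"
    unfolding G_def by (rule sqsum_cdf_measurable) (use w in auto)
  have G_nonneg: "0 \<le> G t" for t unfolding G_def by (rule sqsum_cdf_nonneg)
  have G_eq: "sqsum_cdf_nn (L \<circ> basis_index) (Basis - {axis n 1}) t = ennreal (G t)" for t
    unfolding G_def by (rule sqsum_cdf_nn_eq) (use w in auto)
  have "(\<integral>\<^sup>+x. ennreal ((x $ n) ^ k * tn_dens \<rho> L x) \<partial>lborel)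
      = (\<integral>\<^sup>+y. ennreal (y ^ k * gauss (L n) y)
            * sqsum_cdf_nn (L \<circ> basis_index) (Basis - {axis n 1}) (\<rho> - y\<^sup>2) \<partial>lborel)"
    using nn_integral_tn_dens_coordinate[where L = L and \<phi> = "\<lambda>y. y ^ k" and \<rho> = \<rho> and n = n] L k
    by (simp add: zero_le_even_power)
  also have "\<dots> = (\<integral>\<^sup>+y. ennreal ((y ^ k * G (\<rho> - y\<^sup>2)) * gauss (L n) y) \<partial>lborel)"
    using k G_nonneg
    by (intro nn_integral_cong) (simp add: G_eq ennreal_mult'[symmetric] mult_ac)
  also have "\<dots> = (\<integral>\<^sup>+s. ennreal (((sqrt (L n) * s) ^ k * G (\<rho> - (sqrt (L n) * s)\<^sup>2)) * gauss 1 s) \<partial>lborel)"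
    using k G_nonneg by (intro nn_integral_gauss_rescale L) auto
  also have "\<dots> = (\<integral>\<^sup>+s. ennreal (sqrt (L n) ^ k) * ennreal (s ^ k * gauss 1 s * G (\<rho> - L n * s\<^sup>2)) \<partial>lborel)"
    using L[of n] by (intro nn_integral_cong) (simp add: power_mult_distrib mult_ac flip: ennreal_mult')
  also have "\<dots> = ennreal (sqrt (L n) ^ k) * slice_moment G \<rho> k (L n)"
    unfolding slice_moment_def by (rule nn_integral_cmult) simp
  finally show ?thesis unfolding G_def .
qed

lemma tn_expect_eq_slice_ratio:
  fixes L :: "'n::finite \<Rightarrow> real" and n :: 'n
  assumes L: "\<And>m. 0 < L m"
  defines "G \<equiv> sqsum_cdf (L \<circ> basis_index) (Basis - {axis n 1})"
  shows "tn_expect \<rho> L n = enn2real (slice_moment G \<rho> 2 (L n)) / enn2real (slice_moment G \<rho> 0 (L n))"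
proof -
  have int_eq: "(\<integral>x. (x $ n) ^ k * tn_dens \<rho> L x \<partial>lborel)
      = sqrt (L n) ^ k * enn2real (slice_moment G \<rho> k (L n))" if "even k" for k
    using nn_integral_tn_dens_slice[where L = L and \<rho> = \<rho> and n = n] L tn_dens_nonneg[of L] that
    by (subst integral_eq_nn_integral) (auto simp: G_def enn2real_mult zero_le_even_power)
  have num: "(\<integral>x. (x $ n)\<^sup>2 * tn_dens \<rho> L x \<partial>lborel) = L n * enn2real (slice_moment G \<rho> 2 (L n))"
    using int_eq[of 2] L[of n] by simp
  have den: "(\<integral>x. tn_dens \<rho> L x \<partial>lborel) = enn2real (slice_moment G \<rho> 0 (L n))"
    using int_eq[of 0] by simp
  have "tn_expect \<rho> L n = (\<integral>x. (x $ n)\<^sup>2 * tn_dens \<rho> L x \<partial>lborel) / (L n * (\<integral>x. tn_dens \<rho> L x \<partial>lborel))"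
    unfolding tn_expect_def tn_pdf_def tn_const_def
    by (simp add: field_simps flip: integral_mult_right_zero integral_divide_zero)
  then show ?thesis unfolding num den using L[of n] by simp
qed

text \<open>The main theorem: the distribution function G of the coordinates other than n does not
  depend on lam_n, so both expectations are slice-moment ratios for the same monotone
  log-concave G, and the ratio is nonincreasing in the parameter.\<close>

theorem mainTheorem4:
  fixes \<rho> :: real and n :: "'n::finite" and lam :: "'n \<Rightarrow> real"
  assumes "\<rho> > 0"
    and "\<forall>m. m \<noteq> n \<longrightarrow> lam m > 0"
  shows "\<forall>a b. 0 < a \<longrightarrow> a \<le> b \<longrightarrow>
           tn_expect \<rho> (lam(n := b)) n \<le> tn_expect \<rho> (lam(n := a)) n"
proof (intro allI impI)
  fix a b :: real assume a: "0 < a" and ab: "a \<le> b"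
  define I :: "(real^'n) set" where "I = Basis - {axis n 1}"
  define G where "G = sqsum_cdf (lam \<circ> basis_index) I"
  have w: "0 < (lam \<circ> basis_index) i" if "i \<in> I" for i
    using assms(2) basis_index_off_axis that unfolding I_def by auto
  have fin: "finite I" unfolding I_def by simp
  have expect: "tn_expect \<rho> (lam(n := c)) n
      = enn2real (slice_moment G \<rho> 2 c) / enn2real (slice_moment G \<rho> 0 c)" if "0 < c" for c
  proof -
    have "sqsum_cdf (lam(n := c) \<circ> basis_index) I = G"
      unfolding G_def using basis_index_off_axis by (intro sqsum_cdf_cong) (auto simp: I_def)
    then show ?thesis
      using tn_expect_eq_slice_ratio[of "lam(n := c)" \<rho> n] assms(2) that by (auto simp: I_def)
  qed
  have "enn2real (slice_moment G \<rho> 2 b) / enn2real (slice_moment G \<rho> 0 b)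
      \<le> enn2real (slice_moment G \<rho> 2 a) / enn2real (slice_moment G \<rho> 0 a)"
    unfolding G_def using a ab fin w sqsum_cdf_nonneg
    by (intro slice_moment_ratio_antitone log_concave_sqsum_cdf sqsum_cdf_mono sqsum_cdf_le_1
        sqsum_cdf_measurable) auto
  then show "tn_expect \<rho> (lam(n := b)) n \<le> tn_expect \<rho> (lam(n := a)) n"
    using expect a ab by simp
qed

end
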